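(* Let $W$ be an sc-Banach space, $E=\mathbb R^n\oplus W$, $C=[0,\infty)^n\oplus W$, and let $N\subset E_\infty$ be a finite-dimensional linear subspace such that $C\cap N$ is a closed convex cone. If $a\in C\cap N$ is nonzero and generates an extreme ray of $C\cap N$, then $\dim(N)-1\le\sharp\sigma_a$. If, in addition, $N$ is in good position to $C$, then $\dim(N)-1=\sharp\sigma_a$.
   Context: An sc-Banach space is a Banach space $W$ with nested Banach spaces $W=W_0\supset W_1\supset\cdots$, compact inclusions $W_n\to W_m$ ($m<n$), $W_\infty=\bigcap W_m$ dense in each $W_m$; $E$ has levels $E_m=\mathbb R^n\oplus W_m$, $E_\infty=\mathbb R^n\oplus W_\infty$, and $\|\cdot\|$ is the level-$0$ norm. For $a=(a_1,\dots,a_n,a_\infty)\in C$, $\sigma_a=\{i\in\{1,\dots,n\}: a_i=0\}$. A closed convex cone is a closed convex set $P$ with $P\cap(-P)=\{0\}$ and $\mathbb R^+P=P$; an extreme ray is $\mathbb R^+x$, $x\in P\setminus\{0\}$, such that $y\in P$, $x-y\in P$ imply $y\in\mathbb R^+x$. An sc-complement of $N$ is a closed subspace $N^\perp$ with $E_m=(N\cap E_m)\oplus(N^\perp\cap E_m)$ topologically for all $m$, both pieces sc-subspaces. $N$ is in good position to $C$ if $N\cap C$ has nonempty interior in $N$ and there are an sc-complement $N^\perp$ and $c>0$ such that for $(n,m)\in N\oplus N^\perp$ with $\|m\|\le c\|n\|$: $n+m\in C$ iff $n\in C$. *)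

theory Defs
  imports "HOL-Analysis.Analysis"
begin

definition sc_banach :: "(nat \<Rightarrow> 'w::banach set) \<Rightarrow> (nat \<Rightarrow> 'w \<Rightarrow> real) \<Rightarrow> bool" where
  "sc_banach Wl nl \<longleftrightarrow>
     Wl 0 = UNIV \<and> (\<forall>w. nl 0 w = norm w) \<and>
     (\<forall>m. subspace (Wl m)) \<and>
     (\<forall>m. \<forall>v\<in>Wl m. \<forall>w\<in>Wl m. nl m (v + w) \<le> nl m v + nl m w) \<and>
     (\<forall>m. \<forall>w\<in>Wl m. \<forall>c. nl m (c *\<^sub>R w) = \<bar>c\<bar> * nl m w) \<and>
     (\<forall>m. \<forall>w\<in>Wl m. 0 \<le> nl m w \<and> (nl m w = 0 \<longleftrightarrow> w = 0)) \<and>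
     \<comment> \<open>each level is complete\<close>
     (\<forall>m (s::nat \<Rightarrow> 'w). (\<forall>k. s k \<in> Wl m) \<and>
          (\<forall>e>0. \<exists>K. \<forall>i\<ge>K. \<forall>j\<ge>K. nl m (s i - s j) < e)
        \<longrightarrow> (\<exists>l\<in>Wl m. (\<lambda>k. nl m (s k - l)) \<longlonglongrightarrow> 0)) \<and>
     \<comment> \<open>nested\<close>
     (\<forall>m. Wl (Suc m) \<subseteq> Wl m) \<and>
     \<comment> \<open>compact inclusions W_k \<rightarrow> W_m for m < k: bounded sequences have convergent subsequences\<close>
     (\<forall>m k (s::nat \<Rightarrow> 'w) B. m < k \<and> (\<forall>i. s i \<in> Wl k \<and> nl k (s i) \<le> B)
        \<longrightarrow> (\<exists>r l. strict_mono r \<and> l \<in> Wl m \<and> (\<lambda>i. nl m (s (r i) - l)) \<longlonglongrightarrow> 0)) \<and>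
     \<comment> \<open>W_infinity dense in every level\<close>
     (\<forall>m. \<forall>w\<in>Wl m. \<forall>e>0. \<exists>v\<in>(\<Inter>j. Wl j). nl m (w - v) < e)"

definition Elev :: "(nat \<Rightarrow> 'w set) \<Rightarrow> nat \<Rightarrow> ((real^'n) \<times> 'w) set" where
  "Elev Wl m = {p. snd p \<in> Wl m}"

definition Einf :: "(nat \<Rightarrow> 'w set) \<Rightarrow> ((real^'n) \<times> 'w) set" where
  "Einf Wl = {p. snd p \<in> (\<Inter>m. Wl m)}"

definition Enorm :: "(nat \<Rightarrow> 'w \<Rightarrow> real) \<Rightarrow> nat \<Rightarrow> (real^'n) \<times> 'w::real_normed_vector \<Rightarrow> real" where
  "Enorm nl m p = norm (fst p) + nl m (snd p)"

definition Cquad :: "((real^'n) \<times> 'w) set" where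
  "Cquad = {p. \<forall>i. 0 \<le> fst p $ i}"

definition sigma :: "(real^'n) \<times> 'w \<Rightarrow> 'n set" where
  "sigma a = {i. fst a $ i = 0}"

definition closed_convex_cone :: "'a::real_normed_vector set \<Rightarrow> bool" where
  "closed_convex_cone P \<longleftrightarrow> closed P \<and> convex P \<and> P \<inter> uminus ` P = {0} \<and>
      {t *\<^sub>R x | t x. t \<ge> 0 \<and> x \<in> P} = P"

definition extreme_ray :: "'a::real_vector set \<Rightarrow> 'a \<Rightarrow> bool" where
  "extreme_ray P x \<longleftrightarrow> x \<in> P \<and> x \<noteq> 0 \<and>
     (\<forall>y. y \<in> P \<and> x - y \<in> P \<longrightarrow> (\<exists>t\<ge>0. y = t *\<^sub>R x))"

text \<open>sc-subspace: F closed linear subspace of E such that F_m = F \<inter> E_m is closed in E_m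
  and F_\<infinity> is dense in each F_m (so that F_m defines an sc-structure on F).\<close>

definition sc_subspace :: "(nat \<Rightarrow> 'w::real_normed_vector set) \<Rightarrow> (nat \<Rightarrow> 'w \<Rightarrow> real)
     \<Rightarrow> ((real^'n) \<times> 'w) set \<Rightarrow> bool" where
  "sc_subspace Wl nl F \<longleftrightarrow> subspace F \<and> closed F \<and>
     (\<forall>m (s::nat \<Rightarrow> (real^'n) \<times> 'w) l. (\<forall>k. s k \<in> F \<inter> Elev Wl m) \<and> l \<in> Elev Wl m \<and>
         (\<lambda>k. Enorm nl m (s k - l)) \<longlonglongrightarrow> 0 \<longrightarrow> l \<in> F) \<and>
     (\<forall>m. \<forall>p\<in>F \<inter> Elev Wl m. \<forall>e>0. \<exists>q\<in>F \<inter> Einf Wl. Enorm nl m (p - q) < e)"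

text \<open>M is an sc-complement of N: closed subspace with E_m = (N \<inter> E_m) + (M \<inter> E_m)
  a topological direct sum for every m (algebraically direct, and the projection onto
  N \<inter> E_m continuous, i.e. bounded, for the level-m norm), both pieces sc-subspaces.\<close>

definition sc_complement :: "(nat \<Rightarrow> 'w::real_normed_vector set) \<Rightarrow> (nat \<Rightarrow> 'w \<Rightarrow> real)
     \<Rightarrow> ((real^'n) \<times> 'w) set \<Rightarrow> ((real^'n) \<times> 'w) set \<Rightarrow> bool" where
  "sc_complement Wl nl N M \<longleftrightarrow> subspace M \<and> closed M \<and>
     sc_subspace Wl nl N \<and> sc_subspace Wl nl M \<and>
     (\<forall>m. N \<inter> M \<inter> Elev Wl m = {0} \<and>
          (\<forall>p\<in>Elev Wl m. \<exists>u\<in>N \<inter> Elev Wl m. \<exists>v\<in>M \<inter> Elev Wl m. p = u + v) \<and>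
          (\<exists>K. \<forall>u\<in>N \<inter> Elev Wl m. \<forall>v\<in>M \<inter> Elev Wl m. Enorm nl m u \<le> K * Enorm nl m (u + v)))"

text \<open>Good position of N to C (norm = level-0 norm, interior taken relative to N).\<close>

definition good_position :: "(nat \<Rightarrow> 'w::real_normed_vector set) \<Rightarrow> (nat \<Rightarrow> 'w \<Rightarrow> real)
     \<Rightarrow> ((real^'n) \<times> 'w) set \<Rightarrow> bool" where
  "good_position Wl nl N \<longleftrightarrow>
     (\<exists>x\<in>N \<inter> Cquad. \<exists>e>0. \<forall>y\<in>N. Enorm nl 0 (y - x) < e \<longrightarrow> y \<in> Cquad) \<and>
     (\<exists>M c. sc_complement Wl nl N M \<and> c > 0 \<and>
        (\<forall>u\<in>N. \<forall>v\<in>M. Enorm nl 0 v \<le> c * Enorm nl 0 u \<longrightarrow> (u + v \<in> Cquad \<longleftrightarrow> u \<in> Cquad)))"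

end

theory Submission
  imports Defs
begin

text \<open>Let \<open>\<pi>\<close> be the projection onto the coordinates in \<open>\<sigma>\<^sub>a\<close>. If \<open>x \<in> N\<close> has
  \<open>\<pi> x = 0\<close>, then \<open>a \<pm> t x \<in> C\<close> for small \<open>t > 0\<close>, because the remaining coordinates of
  \<open>a\<close> are positive; extremality of \<open>\<real>\<^sup>+a\<close> then forces \<open>x \<in> \<real>a\<close>. So \<open>N \<inter> ker \<pi> = \<real>a\<close>, and
  rank-nullity gives \<open>dim N = 1 + dim \<pi>(N) \<le> 1 + #\<sigma>\<^sub>a\<close>. In good position, the same perturbation
  argument applied to \<open>a + r v\<close> with \<open>v\<close> in the complement shows that the complement lies in
  \<open>ker \<pi>\<close>; decomposing \<open>(\<xi>, 0)\<close> then shows that \<open>\<pi>\<close> maps \<open>N\<close> onto its whole range.\<close>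

lemma dim_image_plus_dim_kernel:
  fixes f :: "'a::real_vector \<Rightarrow> 'b::real_vector"
  assumes f: "linear f" and S: "subspace S" and SB0: "S \<subseteq> span B0" and "finite B0"
  shows "dim (f ` S) + dim {x\<in>S. f x = 0} = dim S"
proof -
  define K where "K = {x\<in>S. f x = 0}"
  obtain BK where BK: "BK \<subseteq> K" "independent BK" "K \<subseteq> span BK" "card BK = dim K"
    using basis_exists by blast
  have "BK \<subseteq> S" and f0: "\<And>x. x \<in> BK \<Longrightarrow> f x = 0" using BK(1) by (auto simp: K_def)
  then obtain B where B: "BK \<subseteq> B" "B \<subseteq> S" "independent B" "S \<subseteq> span B"
    using maximal_independent_subset_extend[OF _ BK(2)] by blast
  have "finite B" "card B = dim S"
    using independent_span_bound[OF \<open>finite B0\<close> B(3)] B SB0 basis_card_eq_dim by blast+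
  have "finite BK" using \<open>finite B\<close> B(1) finite_subset by blast
  have "f ` S \<subseteq> span (f ` B)" using B(4) linear_span_image[OF f] by blast
  also have "span (f ` B) \<subseteq> span (f ` (B - BK))"
    using span_mono[of "f ` B" "insert 0 (f ` (B - BK))"] f0 by auto
  finally have "dim (f ` S) \<le> card (f ` (B - BK))"
    using \<open>finite B\<close> by (intro dim_le_card) auto
  also have "\<dots> \<le> card B - card BK"
    using card_image_le[of "B - BK" f] \<open>finite B\<close> B(1) by (simp add: card_Diff_subset \<open>finite BK\<close>)
  finally have image_le: "dim (f ` S) + dim K \<le> dim S"
    using card_mono[OF \<open>finite B\<close> B(1)] BK(4) \<open>card B = dim S\<close> by linarith
  obtain D where D: "D \<subseteq> f ` S" "independent D" "f ` S \<subseteq> span D" "card D = dim (f ` S)"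
    using basis_exists by blast
  have "f ` S \<subseteq> span (f ` B0)"
    using SB0 linear_span_image[OF f] by blast
  then have "finite D"
    using independent_span_bound[OF _ D(2)] D(1) \<open>finite B0\<close> by blast
  define g where "g = inv_into S f"
  have g: "g y \<in> S \<and> f (g y) = y" if "y \<in> D" for y
    using D(1) that by (auto simp: g_def inv_into_into f_inv_into_f)
  have "S \<subseteq> span (g ` D \<union> BK)"
  proof
    fix x assume "x \<in> S"
    then obtain c where c: "f x = (\<Sum>y\<in>D. c y *\<^sub>R y)"
      using D(3) span_finite[OF \<open>finite D\<close>] by blast
    define z where "z = (\<Sum>y\<in>D. c y *\<^sub>R g y)"
    have "z \<in> span (g ` D)" unfolding z_def
      by (intro span_sum span_scale span_base) auto
    moreover have "x - z \<in> span BK"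
    proof -
      have "f z = f x"
        unfolding z_def c using g by (simp add: linear_sum[OF f] linear_scale[OF f])
      moreover have "g ` D \<subseteq> S" using g by blast
      then have "z \<in> S" using \<open>z \<in> span (g ` D)\<close> span_minimal[OF _ S] by blast
      ultimately have "x - z \<in> K"
        using \<open>x \<in> S\<close> S by (simp add: K_def subspace_diff linear_diff[OF f])
      then show ?thesis using BK(3) by blast
    qed
    ultimately show "x \<in> span (g ` D \<union> BK)"
      by (metis diff_add_cancel span_add span_mono sup_ge1 sup_ge2 subsetD)
  qed
  then have "dim S \<le> card (g ` D \<union> BK)"
    using \<open>finite D\<close> \<open>finite BK\<close> by (intro dim_le_card) auto
  also have "\<dots> \<le> card D + card BK"
    by (meson card_Un_le card_image_le \<open>finite D\<close> add_right_mono le_trans)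
  finally show ?thesis using image_le D(4) BK(4) unfolding K_def by linarith
qed

lemma extreme_ray_balanced_in_span:
  assumes cone: "closed_convex_cone P" and ray: "extreme_ray P a"
    and "a + x \<in> P" "a - x \<in> P"
  shows "x \<in> span {a}"
proof -
  have half: "(1/2) *\<^sub>R y \<in> P" if "y \<in> P" for y
  proof -
    have "(1/2) *\<^sub>R y \<in> {t *\<^sub>R x | t x. t \<ge> 0 \<and> x \<in> P}" using that by force
    also have "\<dots> = P" using cone by (simp add: closed_convex_cone_def)
    finally show ?thesis .
  qed
  define y where "y = (1/2) *\<^sub>R (a + x)"
  have "a - y = (1/2) *\<^sub>R (a - x)"
    unfolding y_def by (simp add: algebra_simps flip: scaleR_add_left)
  then have "y \<in> P" "a - y \<in> P"
    using half[OF \<open>a + x \<in> P\<close>] half[OF \<open>a - x \<in> P\<close>] by (simp_all add: y_def)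
  then obtain t where "y = t *\<^sub>R a" using ray unfolding extreme_ray_def by blast
  have "a + x = 2 *\<^sub>R y" by (simp add: y_def)
  also have "\<dots> = (2 * t) *\<^sub>R a" using \<open>y = t *\<^sub>R a\<close> by simp
  finally have "x = (2 * t) *\<^sub>R a - a" by (metis add_diff_cancel_left')
  then show ?thesis by (simp add: span_base span_scale span_diff)
qed

lemma Cquad_two_sided_perturbation:
  fixes a x :: "(real^'n) \<times> 'w::real_vector"
  assumes a: "a \<in> Cquad" and x: "\<And>i. i \<in> sigma a \<Longrightarrow> fst x $ i = 0"
  obtains t where "t > 0" "a + t *\<^sub>R x \<in> Cquad" "a - t *\<^sub>R x \<in> Cquad"
proof
  define t where "t = Min (insert 1 ((\<lambda>i. fst a $ i / (\<bar>fst x $ i\<bar> + 1)) ` (- sigma a)))"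
  have pos: "0 < fst a $ i" if "i \<notin> sigma a" for i
    using a that by (auto simp: Cquad_def sigma_def less_le)
  show "t > 0" unfolding t_def
    by (subst Min_gr_iff) (auto intro!: divide_pos_pos pos)
  have bound: "t * \<bar>fst x $ i\<bar> \<le> fst a $ i" if "i \<notin> sigma a" for i
  proof -
    have "t \<le> fst a $ i / (\<bar>fst x $ i\<bar> + 1)" unfolding t_def using that by (intro Min_le) auto
    then have "t * (\<bar>fst x $ i\<bar> + 1) \<le> fst a $ i" by (simp add: pos_le_divide_eq add_pos_nonneg)
    with \<open>t > 0\<close> show ?thesis by (simp add: distrib_left)
  qed
  have "0 \<le> fst a $ i + s * fst x $ i" if "\<bar>s\<bar> = t" for s i
  proof (cases "i \<in> sigma a")
    case True then show ?thesis using x by (simp add: sigma_def)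
  next
    case False
    have "\<bar>s * fst x $ i\<bar> \<le> fst a $ i" using bound[OF False] that by (simp add: abs_mult)
    then show ?thesis by linarith
  qed
  from this[of t] this[of "-t"] \<open>t > 0\<close>
  show "a + t *\<^sub>R x \<in> Cquad" "a - t *\<^sub>R x \<in> Cquad" by (auto simp: Cquad_def)
qed

lemma extreme_ray_Cquad_vanishing_on_sigma:
  assumes "subspace N" "closed_convex_cone (Cquad \<inter> N)" "extreme_ray (Cquad \<inter> N) a"
    and "x \<in> N" "\<And>i. i \<in> sigma a \<Longrightarrow> fst x $ i = 0"
  shows "x \<in> span {a}"
proof -
  have "a \<in> Cquad \<inter> N" using assms(3) by (simp add: extreme_ray_def)
  then obtain t where "t > 0" "a + t *\<^sub>R x \<in> Cquad" "a - t *\<^sub>R x \<in> Cquad"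
    using Cquad_two_sided_perturbation assms(5) by blast
  moreover have "a + t *\<^sub>R x \<in> N" "a - t *\<^sub>R x \<in> N"
    using \<open>a \<in> Cquad \<inter> N\<close> assms(1,4) by (simp_all add: subspace_add subspace_diff subspace_scale)
  ultimately have "t *\<^sub>R x \<in> span {a}"
    using extreme_ray_balanced_in_span assms(2,3) by blast
  with \<open>t > 0\<close> show ?thesis
    using span_scale[of "t *\<^sub>R x" _ "inverse t"] by simp
qed

lemma Enorm_0_eq:
  assumes "sc_banach Wl nl"
  shows "Enorm nl 0 p = norm (fst p) + norm (snd p)"
  using assms by (simp add: sc_banach_def Enorm_def)

lemma good_position_complement_vanishes_on_sigma:
  assumes sc: "sc_banach Wl nl" and "good_position Wl nl N"
    and a: "a \<in> Cquad \<inter> N" "a \<noteq> 0"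
  obtains M where "sc_complement Wl nl N M" "\<And>v i. v \<in> M \<Longrightarrow> i \<in> sigma a \<Longrightarrow> fst v $ i = 0"
proof -
  obtain M c where M: "sc_complement Wl nl N M" and "c > 0" and
    stable: "\<forall>u\<in>N. \<forall>v\<in>M. Enorm nl 0 v \<le> c * Enorm nl 0 u \<longrightarrow> (u + v \<in> Cquad \<longleftrightarrow> u \<in> Cquad)"
    using \<open>good_position Wl nl N\<close> unfolding good_position_def by blast
  have "subspace M" using M by (simp add: sc_complement_def)
  have "Enorm nl 0 a > 0"
    using a(2) by (auto simp: Enorm_0_eq[OF sc] prod_eq_iff add_pos_nonneg add_nonneg_pos)
  have nonneg: "0 \<le> fst v $ i" if "v \<in> M" "i \<in> sigma a" for v i
  proof -
    define r where "r = c * Enorm nl 0 a / (Enorm nl 0 v + 1)"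
    have "Enorm nl 0 v \<ge> 0" by (simp add: Enorm_0_eq[OF sc])
    then have "r > 0" and "r * (Enorm nl 0 v + 1) = c * Enorm nl 0 a"
      using \<open>c > 0\<close> \<open>Enorm nl 0 a > 0\<close> by (simp_all add: r_def)
    have "Enorm nl 0 (r *\<^sub>R v) = r * Enorm nl 0 v"
      using \<open>r > 0\<close> by (simp add: Enorm_0_eq[OF sc] distrib_left)
    also have "\<dots> \<le> c * Enorm nl 0 a"
      using \<open>r * (Enorm nl 0 v + 1) = c * Enorm nl 0 a\<close> \<open>r > 0\<close> by (simp add: distrib_left)
    finally have "Enorm nl 0 (r *\<^sub>R v) \<le> c * Enorm nl 0 a" .
    moreover have "r *\<^sub>R v \<in> M" using \<open>subspace M\<close> \<open>v \<in> M\<close> by (simp add: subspace_scale)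
    ultimately have "a + r *\<^sub>R v \<in> Cquad" using stable a(1) by blast
    then have "0 \<le> fst a $ i + r * fst v $ i" by (simp add: Cquad_def)
    then have "0 \<le> r * fst v $ i" using \<open>i \<in> sigma a\<close> by (simp add: sigma_def)
    with \<open>r > 0\<close> show ?thesis by (simp add: zero_le_mult_iff)
  qed
  show ?thesis
  proof (rule that[OF M])
    fix v i assume "v \<in> M" "i \<in> sigma a"
    then show "fst v $ i = 0"
      using nonneg[of v i] nonneg[of "- v" i] \<open>subspace M\<close> by (simp add: subspace_neg)
  qed
qed

definition coord_proj :: "'n set \<Rightarrow> (real^'n) \<times> 'w \<Rightarrow> real^'n" where
  "coord_proj I p = (\<chi> i. if i \<in> I then fst p $ i else 0)"

lemma linear_coord_proj: "linear (coord_proj I)"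
  by (rule linearI) (auto simp: coord_proj_def vec_eq_iff)

lemma coord_proj_eq_0_iff: "coord_proj I p = 0 \<longleftrightarrow> (\<forall>i\<in>I. fst p $ i = 0)"
  by (auto simp: coord_proj_def vec_eq_iff)

lemma coord_proj_image_subset: "coord_proj I ` A \<subseteq> {\<xi>. \<forall>i. i \<notin> I \<longrightarrow> \<xi> $ i = 0}"
  by (auto simp: coord_proj_def)

lemma extreme_ray_Cquad_kernel_coord_proj:
  assumes "subspace N" "closed_convex_cone (Cquad \<inter> N)" "extreme_ray (Cquad \<inter> N) a"
  shows "{x\<in>N. coord_proj (sigma a) x = 0} = span {a}"
proof (rule subset_antisym)
  show "{x\<in>N. coord_proj (sigma a) x = 0} \<subseteq> span {a}"
    using extreme_ray_Cquad_vanishing_on_sigma[OF assms] by (auto simp: coord_proj_eq_0_iff)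
  have "subspace (N \<inter> {x. coord_proj (sigma a) x = 0})"
    by (intro subspace_inter assms(1) linear_subspace_kernel linear_coord_proj)
  moreover have "N \<inter> {x. coord_proj (sigma a) x = 0} = {x\<in>N. coord_proj (sigma a) x = 0}" by blast
  moreover have "a \<in> N" "coord_proj (sigma a) a = 0"
    using assms(3) by (auto simp: extreme_ray_def coord_proj_eq_0_iff sigma_def)
  ultimately show "span {a} \<subseteq> {x\<in>N. coord_proj (sigma a) x = 0}"
    by (intro span_minimal) auto
qed

lemma good_position_coord_proj_onto:
  fixes a :: "(real^'n) \<times> 'w::banach"
  assumes sc: "sc_banach Wl nl" and "good_position Wl nl N" "a \<in> Cquad \<inter> N" "a \<noteq> 0"
  shows "{\<xi>. \<forall>i. i \<notin> sigma a \<longrightarrow> \<xi> $ i = 0} \<subseteq> coord_proj (sigma a) ` N"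
proof
  fix \<xi> :: "real^'n" assume \<xi>: "\<xi> \<in> {\<xi>. \<forall>i. i \<notin> sigma a \<longrightarrow> \<xi> $ i = 0}"
  obtain M where M: "sc_complement Wl nl N M"
    and M0: "\<And>v i. v \<in> M \<Longrightarrow> i \<in> sigma a \<Longrightarrow> fst v $ i = 0"
    using good_position_complement_vanishes_on_sigma assms by blast
  have "(\<xi>, 0::'w) \<in> Elev Wl 0" using sc by (simp add: Elev_def sc_banach_def)
  then obtain u v where "u \<in> N" "v \<in> M" "(\<xi>, 0) = u + v"
    using M unfolding sc_complement_def by blast
  then have "\<xi> $ i = fst u $ i + fst v $ i" for i
    by (metis fst_add fst_conv vector_add_component)
  then have "coord_proj (sigma a) u = \<xi>"
    using \<xi> M0[OF \<open>v \<in> M\<close>] by (auto simp: coord_proj_def vec_eq_iff)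
  with \<open>u \<in> N\<close> show "\<xi> \<in> coord_proj (sigma a) ` N" by blast
qed

theorem lemma6p5:
  fixes Wl :: "nat \<Rightarrow> 'w::banach set" and nl :: "nat \<Rightarrow> 'w \<Rightarrow> real"
    and N :: "((real^'n) \<times> 'w) set" and a :: "(real^'n) \<times> 'w"
  assumes "sc_banach Wl nl"
    and "subspace N" and "\<exists>B. finite B \<and> N = span B"
    and "N \<subseteq> Einf Wl"
    and "closed_convex_cone (Cquad \<inter> N)"
    and "a \<in> Cquad \<inter> N" and "a \<noteq> 0"
    and "extreme_ray (Cquad \<inter> N) a"
  shows "dim N - 1 \<le> card (sigma a)
         \<and> (good_position Wl nl N \<longrightarrow> dim N - 1 = card (sigma a))"
proof -
  obtain B0 where "finite B0" "N \<subseteq> span B0" using assms(3) by blast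
  define \<pi> :: "(real^'n) \<times> 'w \<Rightarrow> real^'n" where "\<pi> = coord_proj (sigma a)"
  define V where "V = {\<xi>::real^'n. \<forall>i. i \<notin> sigma a \<longrightarrow> \<xi> $ i = 0}"
  have "dim V = card (sigma a)"
    unfolding V_def dim_vec_eq[symmetric] by (rule dim_substandard_cart)
  have kernel: "{x\<in>N. \<pi> x = 0} = span {a}"
    unfolding \<pi>_def using extreme_ray_Cquad_kernel_coord_proj[OF assms(2,5,8)] .
  have "independent {a}"
    using assms(7) by (intro independent_insertI independent_empty) auto
  then have "dim {a} = 1" using dim_eq_card_independent by fastforce
  with kernel have rank: "dim (\<pi> ` N) + 1 = dim N"
    using dim_image_plus_dim_kernel[OF linear_coord_proj[of "sigma a"] assms(2) \<open>N \<subseteq> span B0\<close> \<open>finite B0\<close>]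
    by (simp add: \<pi>_def)
  have "\<pi> ` N \<subseteq> V" unfolding \<pi>_def V_def by (rule coord_proj_image_subset)
  moreover have "V \<subseteq> \<pi> ` N" if "good_position Wl nl N"
    unfolding \<pi>_def V_def using good_position_coord_proj_onto[OF assms(1) that assms(6,7)] .
  ultimately have "dim (\<pi> ` N) \<le> card (sigma a)"
    and "good_position Wl nl N \<Longrightarrow> card (sigma a) \<le> dim (\<pi> ` N)"
    using dim_subset \<open>dim V = card (sigma a)\<close> by metis+
  with rank show ?thesis by fastforce
qed

end
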